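(* Assume $r$ is not a codeword of the GRS code (equivalently $\deg R\ge k$). Let $B\in\mathbb F_q[X]^{(\ell+1)\times(\ell+1)}$ represent a basis $B^{(0)},\dots,B^{(\ell)}$ of $M_{s,\ell}$ such that $BW_\ell$ is in weak Popov form. Let $C^{\mathrm{II}}$ be the $(\ell+2)\times(\ell+2)$ matrix whose first row is $(G^{s+1},0,\dots,0)$ and whose $(i+1)$-th row ($i=0,\dots,\ell$) is the coefficient vector (of length $\ell+2$) of $B^{(i)}(X,Y)(Y-R(X))$. Then $\Delta(C^{\mathrm{II}}W_{\ell+1})=(\ell+1)(\deg R-k+1)\le(\ell+1)(n-k)$.
   Context: Let $\mathbb F_q$ be a finite field, $1\le k<n<q$, $\alpha_0,\dots,\alpha_{n-1}$ distinct nonzero elements of $\mathbb F_q$, $w_0,\dots,w_{n-1}$ nonzero elements of $\mathbb F_q$. The GRS code is $\{(w_0f(\alpha_0),\dots,w_{n-1}f(\alpha_{n-1})): f\in\mathbb F_q[X],\deg f<k\}$. Let $r\in\mathbb F_q^n$, $r_i'=r_i/w_i$, $G=\prod_i(X-\alpha_i)$, and $R$ the unique polynomial of degree $<n$ with $R(\alpha_i)=r_i'$. For positive integers $s\le\ell$, $M_{s,\ell}$ is the $\mathbb F_q[X]$-module of all $Q\in\mathbb F_q[X,Y]$ of $Y$-degree at most $\ell$ such that for each $i$, $Q(X+\alpha_i,Y+r_i')$ has no monomials of total degree less than $s$. A polynomial $\sum_tQ_t(X)Y^t$ has coefficient vector $(Q_0,Q_1,\dots)$; a matrix represents a basis if its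 rows are the coefficient vectors of the basis elements. $W_\ell=\mathrm{diag}(1,X^{k-1},\dots,X^{\ell(k-1)})$. For $v\in\mathbb F_q[X]^m$, $\deg v=\max_i\deg v_i$, $\mathrm{LP}(v)=\max\{i:\deg v_i=\deg v\}$; a matrix is in weak Popov form if its rows have pairwise different leading positions. For a square matrix $V$ with rows $v_i$, $\deg V=\sum_i\deg v_i$ and $\Delta(V)=\deg V-\deg\det V$. *)

theory Defs
  imports "HOL-Computational_Algebra.Polynomial" "Jordan_Normal_Form.Determinant"
begin

text \<open>Vectors of length n are functions nat => 'a, only the entries i < n matter.
  Bivariate polynomials sum_t Q_t(X) Y^t of Y-degree at most l are represented by
  their coefficient vectors (Q_0,...,Q_l) :: 'a poly vec of dimension l+1.\<close>

definition grs_code :: "nat \<Rightarrow> nat \<Rightarrow> (nat \<Rightarrow> 'a::field) \<Rightarrow> (nat \<Rightarrow> 'a) \<Rightarrow> (nat \<Rightarrow> 'a) set" where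
  "grs_code n k alpha w = {c. \<exists>f. degree f < k \<and> (\<forall>i<n. c i = w i * poly f (alpha i))}"

definition rprime :: "(nat \<Rightarrow> 'a::field) \<Rightarrow> (nat \<Rightarrow> 'a) \<Rightarrow> nat \<Rightarrow> 'a" where
  "rprime w r i = r i / w i"

definition Gpoly :: "nat \<Rightarrow> (nat \<Rightarrow> 'a::field) \<Rightarrow> 'a poly" where
  "Gpoly n alpha = (\<Prod>i<n. [:- alpha i, 1:])"

definition Rpoly :: "nat \<Rightarrow> (nat \<Rightarrow> 'a::field) \<Rightarrow> (nat \<Rightarrow> 'a) \<Rightarrow> 'a poly" where
  "Rpoly n alpha r' = (THE R. degree R < n \<and> (\<forall>i<n. poly R (alpha i) = r' i))"

text \<open>Coefficient of X^h Y^j in Q(X+a, Y+b).\<close>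
definition shift_coeff :: "'a::field \<Rightarrow> 'a \<Rightarrow> 'a poly vec \<Rightarrow> nat \<Rightarrow> nat \<Rightarrow> 'a" where
  "shift_coeff a b Q h j =
     (\<Sum>t<dim_vec Q. of_nat (t choose j) * b ^ (t - j) * coeff (pcompose (Q $ t) [:a, 1:]) h)"

definition M_module :: "nat \<Rightarrow> (nat \<Rightarrow> 'a::field) \<Rightarrow> (nat \<Rightarrow> 'a) \<Rightarrow> nat \<Rightarrow> nat \<Rightarrow> 'a poly vec set" where
  "M_module n alpha r' s l = {Q. dim_vec Q = l + 1 \<and>
     (\<forall>i<n. \<forall>h j. h + j < s \<longrightarrow> shift_coeff (alpha i) (r' i) Q h j = 0)}"

definition represents_basis :: "'a::field poly mat \<Rightarrow> nat \<Rightarrow> 'a poly vec set \<Rightarrow> bool" where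
  "represents_basis B m M \<longleftrightarrow> B \<in> carrier_mat m m \<and> (\<forall>i<m. row B i \<in> M) \<and>
     (\<forall>Q\<in>M. \<exists>!c. c \<in> carrier_vec m \<and> Q = transpose_mat B *\<^sub>v c)"

definition W_mat :: "nat \<Rightarrow> nat \<Rightarrow> 'a::field poly mat" where
  "W_mat k l = mat (l + 1) (l + 1) (\<lambda>(i, j). if i = j then monom 1 (i * (k - 1)) else 0)"

definition vdeg :: "'a::zero poly vec \<Rightarrow> nat" where
  "vdeg v = Max (insert 0 {degree (v $ i) | i. i < dim_vec v \<and> v $ i \<noteq> 0})"

definition LP :: "'a::zero poly vec \<Rightarrow> nat" where
  "LP v = Max {i. i < dim_vec v \<and> v $ i \<noteq> 0 \<and> degree (v $ i) = vdeg v}"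

definition weak_popov :: "'a::zero poly mat \<Rightarrow> bool" where
  "weak_popov V \<longleftrightarrow> (\<forall>i<dim_row V. row V i \<noteq> 0\<^sub>v (dim_col V)) \<and>
     (\<forall>i<dim_row V. \<forall>j<dim_row V. i \<noteq> j \<longrightarrow> LP (row V i) \<noteq> LP (row V j))"

definition mdeg :: "'a::zero poly mat \<Rightarrow> nat" where
  "mdeg V = (\<Sum>i<dim_row V. vdeg (row V i))"

definition Delta :: "'a::field poly mat \<Rightarrow> int" where
  "Delta V = int (mdeg V) - int (degree (det V))"

text \<open>Coefficient vector of Q(X,Y) * (Y - R(X)) (length one more).\<close>
definition mult_Y_minus :: "'a::field poly \<Rightarrow> 'a poly vec \<Rightarrow> 'a poly vec" where
  "mult_Y_minus R v = vec (dim_vec v + 1)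
     (\<lambda>t. (if 0 < t then v $ (t - 1) else 0) - (if t < dim_vec v then R * v $ t else 0))"

definition C_II :: "'a::field poly \<Rightarrow> nat \<Rightarrow> 'a poly \<Rightarrow> nat \<Rightarrow> 'a poly mat \<Rightarrow> 'a poly mat" where
  "C_II G s R l B = mat (l + 2) (l + 2) (\<lambda>(a, b).
     if a = 0 then (if b = 0 then G ^ (s + 1) else 0)
     else mult_Y_minus R (row B (a - 1)) $ b)"

end

theory Submission
  imports Defs
begin

text \<open>
  Let \<open>C = C\<^sup>I\<^sup>I\<close>. Expanding \<open>C\<close> along its first row and factoring the remaining block as \<open>B\<close>
  times a unipotent matrix gives \<open>det C = G\<^sup>s\<^sup>+\<^sup>1 det B\<close>, and \<open>W\<close> only contributes a power of \<open>X\<close>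
  to the determinant. Row \<open>i + 1\<close> of \<open>C W\<^sub>l\<^sub>+\<^sub>1\<close> is row \<open>i\<close> of \<open>B W\<^sub>l\<close> shifted one place to the
  right and multiplied by \<open>X\<^sup>k\<^sup>-\<^sup>1\<close>, minus \<open>R\<close> times that row; since \<open>deg R > k - 1\<close> its degree
  is \<open>deg R\<close> plus the degree of the row of \<open>B W\<^sub>l\<close>. As \<open>B W\<^sub>l\<close> is in weak Popov form its
  determinant has degree exactly the sum of its row degrees: the coefficient of the determinant
  in that degree is the determinant of the leading coefficient matrix, which up to a column
  permutation is triangular with nonzero diagonal. Subtracting the two degree counts leaves
  \<open>(l + 1) deg R - (l + 1)(k - 1)\<close>. Finally \<open>k \<le> deg R < n\<close>, because \<open>R\<close> interpolates \<open>n\<close>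
  values and \<open>deg R < k\<close> would make \<open>r\<close> a codeword.
\<close>

section \<open>Degrees of polynomial determinants\<close>

lemma coeff_mult_at_degree_bounds:
  fixes p q :: "'a::comm_semiring_0 poly"
  assumes "degree p \<le> a" "degree q \<le> b"
  shows "coeff (p * q) (a + b) = coeff p a * coeff q b"
proof (cases "degree p = a \<and> degree q = b")
  case True
  then show ?thesis by (auto simp: coeff_mult_degree_sum)
next
  case False
  then have "degree (p * q) < a + b" using degree_mult_le[of p q] assms by linarith
  moreover have "coeff p a = 0 \<or> coeff q b = 0"
    using False assms by (auto intro: coeff_eq_0)
  ultimately show ?thesis by (auto intro: coeff_eq_0)
qed

lemma coeff_prod_at_degree_bounds:
  fixes f :: "'b \<Rightarrow> 'a::comm_semiring_1 poly"
  assumes "finite A" "\<And>i. i \<in> A \<Longrightarrow> degree (f i) \<le> d i"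
  shows "coeff (\<Prod>i\<in>A. f i) (\<Sum>i\<in>A. d i) = (\<Prod>i\<in>A. coeff (f i) (d i))"
  using assms
proof (induction A rule: finite_induct)
  case (insert x F)
  have "degree (\<Prod>i\<in>F. f i) \<le> (\<Sum>i\<in>F. d i)"
    by (rule order.trans[OF degree_prod_sum_le[OF insert(1)]]) (auto intro!: sum_mono insert(4))
  then show ?case
    using insert coeff_mult_at_degree_bounds[of "f x" "d x"] by simp
qed simp

lemma coeff_of_int_mult: "coeff (of_int c * p) n = of_int c * coeff (p :: 'a::comm_ring_1 poly) n"
  by (simp add: of_int_poly)

lemma permutes_pointwise_le_imp_eq:
  fixes \<sigma> \<tau> :: "nat \<Rightarrow> nat"
  assumes "finite S" "\<sigma> permutes S" "\<tau> permutes S" "\<And>i. i \<in> S \<Longrightarrow> \<sigma> i \<le> \<tau> i"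
  shows "\<sigma> = \<tau>"
proof (rule ccontr)
  assume "\<sigma> \<noteq> \<tau>"
  then obtain j where j: "j \<in> S" "\<sigma> j \<noteq> \<tau> j"
    using permutes_not_in[OF assms(2)] permutes_not_in[OF assms(3)] by (metis ext)
  then have "(\<Sum>i\<in>S. \<sigma> i) < (\<Sum>i\<in>S. \<tau> i)"
    using assms(1,4) by (intro sum_strict_mono_ex1) (auto simp: order_less_le)
  moreover have "(\<Sum>i\<in>S. \<sigma> i) = (\<Sum>i\<in>S. \<tau> i)"
    using sum.permute[OF assms(2), of id] sum.permute[OF assms(3), of id] by simp
  ultimately show False by simp
qed

lemma coeff_det_at_row_degree_bounds:
  fixes V :: "'a::comm_ring_1 poly mat"
  assumes V: "V \<in> carrier_mat m m"
    and deg: "\<And>i j. i < m \<Longrightarrow> j < m \<Longrightarrow> degree (V $$ (i, j)) \<le> d i"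
  shows "degree (det V) \<le> (\<Sum>i<m. d i)"
    and "coeff (det V) (\<Sum>i<m. d i) = det (mat m m (\<lambda>(i, j). coeff (V $$ (i, j)) (d i)))"
proof -
  let ?P = "{\<sigma>. \<sigma> permutes {0..<m}}"
  let ?t = "\<lambda>\<sigma>. signof \<sigma> * (\<Prod>i = 0..<m. V $$ (i, \<sigma> i))"
  have detV: "det V = (\<Sum>\<sigma>\<in>?P. ?t \<sigma>)" by (rule det_def'[OF V])
  have deg\<sigma>: "degree (V $$ (i, \<sigma> i)) \<le> d i" if "\<sigma> \<in> ?P" "i \<in> {0..<m}" for \<sigma> i
    using deg permutes_in_image that by auto
  have "degree (?t \<sigma>) \<le> (\<Sum>i<m. d i)" if "\<sigma> \<in> ?P" for \<sigma>
  proof -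
    have "degree (\<Prod>i = 0..<m. V $$ (i, \<sigma> i)) \<le> (\<Sum>i = 0..<m. degree (V $$ (i, \<sigma> i)))"
      using degree_prod_sum_le[of "{0..<m}" "\<lambda>i. V $$ (i, \<sigma> i)"] by (simp add: o_def)
    also have "\<dots> \<le> (\<Sum>i<m. d i)"
      using deg\<sigma>[OF that] by (auto simp: atLeast0LessThan intro!: sum_mono)
    finally show ?thesis by (simp add: of_int_poly order.trans[OF degree_smult_le])
  qed
  then show "degree (det V) \<le> (\<Sum>i<m. d i)"
    unfolding detV by (intro degree_sum_le) (auto simp: finite_permutations)
  have "coeff (?t \<sigma>) (\<Sum>i<m. d i) = signof \<sigma> * (\<Prod>i = 0..<m. coeff (V $$ (i, \<sigma> i)) (d i))"
    if "\<sigma> \<in> ?P" for \<sigma>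
    using coeff_prod_at_degree_bounds[of "{0..<m}" "\<lambda>i. V $$ (i, \<sigma> i)" d] deg\<sigma>[OF that]
    by (simp add: coeff_of_int_mult atLeast0LessThan)
  then show "coeff (det V) (\<Sum>i<m. d i) = det (mat m m (\<lambda>(i, j). coeff (V $$ (i, j)) (d i)))"
    unfolding detV coeff_sum det_def'[OF mat_carrier]
    by (intro sum.cong refl) (auto intro!: arg_cong[where f = "(*) _"] prod.cong dest: permutes_in_image)
qed

lemma det_ne_zero_if_distinct_rightmost_entries:
  fixes L :: "'a::idom mat"
  assumes L: "L \<in> carrier_mat m m" and p: "p permutes {0..<m}"
    and nz: "\<And>i. i < m \<Longrightarrow> L $$ (i, p i) \<noteq> 0"
    and zero: "\<And>i j. i < m \<Longrightarrow> j < m \<Longrightarrow> p i < j \<Longrightarrow> L $$ (i, j) = 0"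
  shows "det L \<noteq> 0"
proof -
  let ?t = "\<lambda>\<sigma>. signof \<sigma> * (\<Prod>i = 0..<m. L $$ (i, \<sigma> i))"
  have "?t \<sigma> = 0" if \<sigma>: "\<sigma> permutes {0..<m}" "\<sigma> \<noteq> p" for \<sigma>
  proof -
    obtain i where i: "i < m" "p i < \<sigma> i"
      using permutes_pointwise_le_imp_eq[OF _ \<sigma>(1) p] \<sigma>(2) by (force simp: not_le)
    then have "L $$ (i, \<sigma> i) = 0" using zero permutes_in_image[OF \<sigma>(1)] by auto
    then show ?thesis using i by (auto intro!: prod_zero)
  qed
  then have "det L = (\<Sum>\<sigma>\<in>{p}. ?t \<sigma>)"
    unfolding det_def'[OF L] using p by (intro sum.mono_neutral_right) (auto simp: finite_permutations)
  moreover have "(\<Prod>i = 0..<m. L $$ (i, p i)) \<noteq> 0" using nz by (simp add: prod_zero_iff)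
  ultimately show ?thesis by (cases rule: sign_cases[of p]) simp_all
qed

section \<open>Row degree and leading position\<close>

lemma finite_entry_degrees: "finite {degree (v $ i) | i. i < dim_vec v \<and> v $ i \<noteq> 0}"
  by (rule finite_subset[of _ "(\<lambda>i. degree (v $ i)) ` {..<dim_vec v}"]) auto

lemma degree_le_vdeg: "i < dim_vec v \<Longrightarrow> degree (v $ i) \<le> vdeg v"
  unfolding vdeg_def by (cases "v $ i = 0") (auto intro!: Max_ge finite_entry_degrees)

lemma vdeg_leI: "(\<And>i. i < dim_vec v \<Longrightarrow> v $ i \<noteq> 0 \<Longrightarrow> degree (v $ i) \<le> d) \<Longrightarrow> vdeg v \<le> d"
  unfolding vdeg_def using finite_entry_degrees[of v] by (auto intro!: Max.boundedI)

lemma vdeg_attained: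
  assumes "v \<noteq> 0\<^sub>v (dim_vec v)"
  shows "\<exists>i<dim_vec v. v $ i \<noteq> 0 \<and> degree (v $ i) = vdeg v"
proof -
  let ?S = "{degree (v $ i) | i. i < dim_vec v \<and> v $ i \<noteq> 0}"
  have ne: "?S \<noteq> {}" using assms by (auto simp: vec_eq_iff)
  then have "vdeg v = Max ?S" unfolding vdeg_def using finite_entry_degrees[of v] by simp
  moreover have "Max ?S \<in> ?S" using ne finite_entry_degrees[of v] by (intro Max_in)
  ultimately show ?thesis by auto
qed

lemma LP_spec:
  assumes "v \<noteq> 0\<^sub>v (dim_vec v)"
  shows "LP v < dim_vec v \<and> v $ LP v \<noteq> 0 \<and> degree (v $ LP v) = vdeg v"
proof -
  let ?S = "{i. i < dim_vec v \<and> v $ i \<noteq> 0 \<and> degree (v $ i) = vdeg v}"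
  have "?S \<noteq> {}" using vdeg_attained[OF assms] by auto
  then have "LP v \<in> ?S" unfolding LP_def by (intro Max_in) auto
  then show ?thesis by simp
qed

lemma le_LP: "j < dim_vec v \<Longrightarrow> v $ j \<noteq> 0 \<Longrightarrow> degree (v $ j) = vdeg v \<Longrightarrow> j \<le> LP v"
  unfolding LP_def by (intro Max_ge) auto

lemma weak_popov_degree_det:
  fixes V :: "'a::field poly mat"
  assumes V: "V \<in> carrier_mat m m" and wp: "weak_popov V"
  shows "det V \<noteq> 0 \<and> degree (det V) = mdeg V"
proof -
  define d where "d i = vdeg (row V i)" for i
  define p where "p i = (if i < m then LP (row V i) else i)" for i
  have LP: "p i < m \<and> V $$ (i, p i) \<noteq> 0 \<and> degree (V $$ (i, p i)) = d i" if "i < m" for i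
    using LP_spec[of "row V i"] wp V that unfolding weak_popov_def p_def d_def by auto
  have deg: "degree (V $$ (i, j)) \<le> d i" if "i < m" "j < m" for i j
    using degree_le_vdeg[of j "row V i"] that V unfolding d_def by auto
  have right_of_LP: "coeff (V $$ (i, j)) (d i) = 0" if "i < m" "j < m" "p i < j" for i j
  proof (rule ccontr)
    assume "coeff (V $$ (i, j)) (d i) \<noteq> 0"
    then have "V $$ (i, j) \<noteq> 0" "degree (V $$ (i, j)) = d i"
      using le_degree[of "V $$ (i, j)" "d i"] deg[OF that(1,2)] by auto
    then have "j \<le> p i" using le_LP[of j "row V i"] that V unfolding d_def p_def by auto
    with that show False by simp
  qed
  have leading: "coeff (V $$ (i, p i)) (d i) \<noteq> 0" if "i < m" for i
    using LP[OF that] leading_coeff_neq_0 by metis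
  have "p permutes {0..<m}"
  proof (rule inj_imp_permutes)
    show "inj_on p {0..<m}"
      using wp V unfolding weak_popov_def p_def by (intro inj_onI) auto
  qed (use LP in \<open>auto simp: p_def\<close>)
  then have "det (mat m m (\<lambda>(i, j). coeff (V $$ (i, j)) (d i))) \<noteq> 0"
    by (rule det_ne_zero_if_distinct_rightmost_entries[OF mat_carrier])
      (use LP leading right_of_LP in auto)
  then have "coeff (det V) (\<Sum>i<m. d i) \<noteq> 0"
    using coeff_det_at_row_degree_bounds(2)[OF V deg] by simp
  moreover have "mdeg V = (\<Sum>i<m. d i)" unfolding mdeg_def d_def using V by simp
  ultimately show ?thesis
    using le_degree coeff_det_at_row_degree_bounds(1)[OF V deg] by fastforce
qed

section \<open>The matrices \<open>W\<close> and \<open>C\<^sup>I\<^sup>I\<close>\<close>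

lemma W_mat_carrier: "W_mat k l \<in> carrier_mat (l + 1) (l + 1)"
  unfolding W_mat_def by simp

lemma dim_W_mat [simp]: "dim_row (W_mat k l) = l + 1" "dim_col (W_mat k l) = l + 1"
  by (simp_all add: W_mat_def)

lemma mult_W_mat_carrier: "A \<in> carrier_mat m (l + 1) \<Longrightarrow> A * W_mat k l \<in> carrier_mat m (l + 1)"
  using mult_carrier_mat[OF _ W_mat_carrier] .

lemma index_mult_W_mat:
  assumes A: "A \<in> carrier_mat m (l + 1)" and "i < m" "j < l + 1"
  shows "(A * W_mat k l) $$ (i, j) = A $$ (i, j) * monom 1 (j * (k - 1))"
proof -
  have "(A * W_mat k l) $$ (i, j)
      = (\<Sum>c = 0..<l + 1. A $$ (i, c) * (if c = j then monom 1 (c * (k - 1)) else 0))"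
    using assms unfolding W_mat_def by (simp add: scalar_prod_def)
  also have "\<dots> = (\<Sum>c = 0..<l + 1. if c = j then A $$ (i, c) * monom 1 (j * (k - 1)) else 0)"
    by (rule sum.cong) auto
  finally show ?thesis using assms(3) by simp
qed

lemma prod_list_monom_upt:
  "prod_list (map (\<lambda>i. monom (1::'a::comm_semiring_1) (i * c)) [0..<N]) = monom 1 (\<Sum>i<N. i * c)"
  by (induction N) (simp_all add: mult_monom)

lemma det_W_mat: "det (W_mat k l :: 'a::field poly mat) = monom 1 (\<Sum>i<l + 1. i * (k - 1))"
proof -
  have "det (W_mat k l :: 'a poly mat) = prod_list (map (\<lambda>i. monom 1 (i * (k - 1))) [0..<l + 1])"
    by (subst det_upper_triangular[OF _ W_mat_carrier])
      (auto simp: W_mat_def upper_triangular_def diag_mat_def intro!: arg_cong[where f = prod_list])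
  then show ?thesis by (simp only: prod_list_monom_upt)
qed

lemma dim_C_II [simp]: "dim_row (C_II G s R l B) = l + 2" "dim_col (C_II G s R l B) = l + 2"
  by (simp_all add: C_II_def)

lemma mat_delete_C_II:
  assumes B: "B \<in> carrier_mat (l + 1) (l + 1)"
  shows "mat_delete (C_II G s R l B) 0 0
    = B * mat (l + 1) (l + 1) (\<lambda>(a, c). (if a = c then 1 else 0) - (if a = Suc c then R else 0))"
    (is "_ = B * ?U")
proof (rule eq_matI)
  fix i j assume "i < dim_row (B * ?U)" "j < dim_col (B * ?U)"
  then have i: "i < l + 1" and j: "j < l + 1" using B by auto
  have "(B * ?U) $$ (i, j) = (\<Sum>a\<in>{0..<l + 1}. (if a = j then B $$ (i, a) else 0)
      - (if a = Suc j then R * B $$ (i, a) else 0))"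
    using B i j by (auto simp: scalar_prod_def right_diff_distrib mult.commute intro!: sum.cong)
  also have "\<dots> = B $$ (i, j) - (if Suc j < l + 1 then R * B $$ (i, Suc j) else 0)"
    using j by (simp only: sum_subtractf sum.delta finite_atLeastLessThan) auto
  finally show "mat_delete (C_II G s R l B) 0 0 $$ (i, j) = (B * ?U) $$ (i, j)"
    using B i j by (simp add: mat_delete_def C_II_def mult_Y_minus_def)
qed (use B in \<open>auto simp: mat_delete_def C_II_def\<close>)

lemma det_C_II:
  fixes B :: "'a::field poly mat"
  assumes B: "B \<in> carrier_mat (l + 1) (l + 1)"
  shows "det (C_II G s R l B) = G ^ (s + 1) * det B"
proof -
  let ?C = "C_II G s R l B"
  let ?U = "mat (l + 1) (l + 1) (\<lambda>(a, c). (if a = c then 1 else 0) - (if a = Suc c then R else 0))"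
  have "diag_mat ?U = map (\<lambda>_. 1) [0..<l + 1]"
    unfolding diag_mat_def by (intro map_cong) auto
  then have detU: "det ?U = 1"
    by (subst det_lower_triangular[of "l + 1"]) (auto simp: map_replicate_const)
  have C: "?C \<in> carrier_mat (l + 2) (l + 2)" unfolding C_II_def by simp
  have "det ?C = (\<Sum>j<Suc (l + 1). ?C $$ (0, j) * cofactor ?C 0 j)"
    using laplace_expansion_row[OF C, of 0] by simp
  also have "\<dots> = ?C $$ (0, 0) * cofactor ?C 0 0"
    unfolding sum.lessThan_Suc_shift by (simp add: C_II_def)
  also have "\<dots> = G ^ (s + 1) * det (B * ?U)"
    unfolding cofactor_def mat_delete_C_II[OF B] by (simp add: C_II_def)
  also have "det (B * ?U) = det B"
    using detU by (simp add: det_mult[OF B])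
  finally show ?thesis .
qed

lemma degree_shifted_entry_le:
  assumes "b \<le> dim_vec v"
  shows "degree (if 0 < b then v $ (b - 1) * monom 1 c else 0) \<le> vdeg v + c"
proof (cases "0 < b")
  case True
  have "degree (v $ (b - 1) * monom 1 c) \<le> degree (v $ (b - 1)) + c"
    by (rule order.trans[OF degree_mult_le]) (simp add: degree_monom_le)
  also have "\<dots> \<le> vdeg v + c" using degree_le_vdeg[of "b - 1" v] assms True by simp
  finally show ?thesis using True by simp
qed simp

lemma vdeg_shift_minus_mult:
  fixes u v :: "'a::field poly vec"
  assumes dv: "dim_vec v = N" and du: "dim_vec u = Suc N" and v0: "v \<noteq> 0\<^sub>v N"
    and c: "c < degree R"
    and u: "\<And>b. b < Suc N \<Longrightarrow>
      u $ b = (if 0 < b then v $ (b - 1) * monom 1 c else 0) - (if b < N then R * v $ b else 0)"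
  shows "vdeg u = degree R + vdeg v"
proof (rule antisym)
  show "vdeg u \<le> degree R + vdeg v"
  proof (rule vdeg_leI)
    fix b assume b: "b < dim_vec u"
    have "degree (if b < N then R * v $ b else 0) \<le> degree R + vdeg v"
      using degree_mult_le[of R "v $ b"] degree_le_vdeg[of b v] dv by auto
    moreover have "degree (if 0 < b then v $ (b - 1) * monom 1 c else 0) \<le> degree R + vdeg v"
      using degree_shifted_entry_le[of b v c] b du dv c by simp
    ultimately show "degree (u $ b) \<le> degree R + vdeg v"
      using u[of b] b du degree_diff_le by auto
  qed
next
  obtain j where j: "j < N" "v $ j \<noteq> 0" "degree (v $ j) = vdeg v"
    using vdeg_attained[of v] v0 dv by auto
  have "R \<noteq> 0" using c by auto
  then have "degree (R * v $ j) = degree R + vdeg v" using j by (simp add: degree_mult_eq)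
  moreover have "degree (if 0 < j then v $ (j - 1) * monom 1 c else 0) < degree R + vdeg v"
    using degree_shifted_entry_le[of j v c] j dv c by simp
  ultimately have "degree (u $ j) = degree R + vdeg v"
    using u[of j] j degree_add_eq_right[of _ "- (R * v $ j)"] by (simp del: degree_mult_eq)
  then show "degree R + vdeg v \<le> vdeg u"
    using degree_le_vdeg[of j u] du j by simp
qed

lemma index_C_II_W_Suc:
  fixes B :: "'a::field poly mat"
  assumes B: "B \<in> carrier_mat (l + 1) (l + 1)" and a: "a < l + 1" and b: "b < l + 2"
  shows "(C_II G s R l B * W_mat k (l + 1)) $$ (Suc a, b)
    = (if 0 < b then (B * W_mat k l) $$ (a, b - 1) * monom 1 (k - 1) else 0)
      - (if b < l + 1 then R * (B * W_mat k l) $$ (a, b) else 0)"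
proof -
  have C: "C_II G s R l B \<in> carrier_mat (l + 2) (l + 1 + 1)" by (simp add: C_II_def)
  have "(C_II G s R l B * W_mat k (l + 1)) $$ (Suc a, b)
      = C_II G s R l B $$ (Suc a, b) * monom 1 (b * (k - 1))"
    by (rule index_mult_W_mat[OF C]) (use a b in simp_all)
  also have "\<dots> = ((if 0 < b then B $$ (a, b - 1) else 0) - (if b < l + 1 then R * B $$ (a, b) else 0))
        * monom 1 (b * (k - 1))"
    using a b B by (simp add: C_II_def mult_Y_minus_def)
  also have "\<dots> = (if 0 < b then (B * W_mat k l) $$ (a, b - 1) * monom 1 (k - 1) else 0)
      - (if b < l + 1 then R * (B * W_mat k l) $$ (a, b) else 0)"
    using index_mult_W_mat[OF B] a b
    by (cases b) (auto simp: left_diff_distrib mult_monom mult.assoc add.commute)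
  finally show ?thesis .
qed

lemma vdeg_row_0_C_II_W:
  "vdeg (row (C_II G s R l B * W_mat k (l + 1)) 0) = degree (G ^ (s + 1))"
proof -
  let ?v = "row (C_II G s R l B * W_mat k (l + 1)) 0"
  have C: "C_II G s R l B \<in> carrier_mat (l + 2) (l + 1 + 1)" by (simp add: C_II_def)
  have dim: "dim_vec ?v = l + 2" by simp
  have entry: "?v $ b = (if b = 0 then G ^ (s + 1) else 0)" if "b < l + 2" for b
    using index_mult_W_mat[OF C, of 0 b] that by (simp add: C_II_def)
  show ?thesis
    using vdeg_leI[of ?v "degree (G ^ (s + 1))"] degree_le_vdeg[of 0 ?v] entry dim
    by (simp add: antisym)
qed

lemma vdeg_row_Suc_C_II_W:
  fixes B :: "'a::field poly mat"
  assumes B: "B \<in> carrier_mat (l + 1) (l + 1)" and a: "a < l + 1"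
    and nz: "row (B * W_mat k l) a \<noteq> 0\<^sub>v (l + 1)" and R: "k - 1 < degree R"
  shows "vdeg (row (C_II G s R l B * W_mat k (l + 1)) (Suc a)) = degree R + vdeg (row (B * W_mat k l) a)"
proof (rule vdeg_shift_minus_mult[OF _ _ nz R])
  have BW: "B * W_mat k l \<in> carrier_mat (l + 1) (l + 1)" using mult_W_mat_carrier[OF B] .
  show "dim_vec (row (B * W_mat k l) a) = l + 1" using BW by simp
  show "dim_vec (row (C_II G s R l B * W_mat k (l + 1)) (Suc a)) = Suc (l + 1)"
    by simp
  fix b assume "b < Suc (l + 1)"
  then show "row (C_II G s R l B * W_mat k (l + 1)) (Suc a) $ b
    = (if 0 < b then row (B * W_mat k l) a $ (b - 1) * monom 1 (k - 1) else 0)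
      - (if b < l + 1 then R * row (B * W_mat k l) a $ b else 0)"
    using index_C_II_W_Suc[OF B a, where b = b] a B
    by (simp del: index_mult_mat(1) add: index_mult_mat(2,3))
qed

lemma mdeg_C_II_W:
  fixes B :: "'a::field poly mat"
  assumes B: "B \<in> carrier_mat (l + 1) (l + 1)" and wp: "weak_popov (B * W_mat k l)"
    and R: "k - 1 < degree R"
  shows "mdeg (C_II G s R l B * W_mat k (l + 1))
    = degree (G ^ (s + 1)) + (l + 1) * degree R + mdeg (B * W_mat k l)"
proof -
  let ?CW = "C_II G s R l B * W_mat k (l + 1)" and ?BW = "B * W_mat k l"
  have BW: "?BW \<in> carrier_mat (l + 1) (l + 1)" using mult_W_mat_carrier[OF B] .
  have nz: "row ?BW a \<noteq> 0\<^sub>v (l + 1)" if "a < l + 1" for a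
    using wp that BW unfolding weak_popov_def by auto
  have "mdeg ?CW = (\<Sum>a<Suc (l + 1). vdeg (row ?CW a))"
    unfolding mdeg_def by simp
  also have "\<dots> = vdeg (row ?CW 0) + (\<Sum>a<l + 1. vdeg (row ?CW (Suc a)))"
    by (simp only: sum.lessThan_Suc_shift)
  also have "\<dots> = degree (G ^ (s + 1)) + (\<Sum>a<l + 1. degree R + vdeg (row ?BW a))"
    using vdeg_row_Suc_C_II_W[OF B _ nz R] vdeg_row_0_C_II_W by simp
  also have "\<dots> = degree (G ^ (s + 1)) + (l + 1) * degree R + mdeg ?BW"
    unfolding mdeg_def using B by (simp add: sum.distrib)
  finally show ?thesis .
qed

lemma degree_det_C_II_W:
  fixes B :: "'a::field poly mat"
  assumes B: "B \<in> carrier_mat (l + 1) (l + 1)" and "G \<noteq> 0" "det B \<noteq> 0"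
  shows "degree (det (C_II G s R l B * W_mat k (l + 1)))
    = degree (G ^ (s + 1)) + degree (det B) + (\<Sum>i<l + 2. i * (k - 1))"
proof -
  have C: "C_II G s R l B \<in> carrier_mat (l + 2) (l + 2)" by (simp add: C_II_def)
  have "det (C_II G s R l B * W_mat k (l + 1)) = G ^ (s + 1) * det B * monom 1 (\<Sum>i<l + 2. i * (k - 1))"
    using det_mult[OF C, of "W_mat k (l + 1)"] W_mat_carrier[of k "l + 1"]
    by (simp add: det_C_II[OF B] det_W_mat numeral_2_eq_2)
  then show ?thesis using assms by (simp add: degree_mult_eq degree_monom_eq)
qed

lemma Delta_C_II_W:
  fixes B :: "'a::field poly mat"
  assumes B: "B \<in> carrier_mat (l + 1) (l + 1)" and wp: "weak_popov (B * W_mat k l)"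
    and k: "1 \<le> k" "k \<le> degree R" and G: "G \<noteq> 0"
  shows "Delta (C_II G s R l B * W_mat k (l + 1)) = int (l + 1) * (int (degree R) - int k + 1)"
proof -
  have BW: "B * W_mat k l \<in> carrier_mat (l + 1) (l + 1)" using mult_W_mat_carrier[OF B] .
  have detBW: "det (B * W_mat k l) = det B * monom 1 (\<Sum>i<l + 1. i * (k - 1))"
    using det_mult[OF B W_mat_carrier] by (simp add: det_W_mat)
  have "det (B * W_mat k l) \<noteq> 0" "degree (det (B * W_mat k l)) = mdeg (B * W_mat k l)"
    using weak_popov_degree_det[OF BW wp] by auto
  then have detB: "det B \<noteq> 0"
    and mdeg_BW: "mdeg (B * W_mat k l) = degree (det B) + (\<Sum>i<l + 1. i * (k - 1))"
    unfolding detBW by (auto simp: degree_mult_eq degree_monom_eq)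
  obtain k' where k': "k = Suc k'" using k(1) by (cases k) auto
  have "(\<Sum>i<l + 2. i * (k - 1)) + (l + 1) = (\<Sum>i<l + 1. i * (k - 1)) + (l + 1) * k"
    unfolding k' by (simp add: numeral_2_eq_2)
  moreover have "k - 1 < degree R" using k by simp
  ultimately show ?thesis
    unfolding Delta_def mdeg_C_II_W[OF B wp \<open>k - 1 < degree R\<close>] degree_det_C_II_W[OF B G detB] mdeg_BW
    by (simp add: algebra_simps of_nat_diff flip: of_nat_add of_nat_mult)
qed

section \<open>The interpolation polynomial\<close>

lemma interpolating_poly_exists:
  fixes alpha :: "nat \<Rightarrow> 'a::field"
  assumes inj: "inj_on alpha {..<n}" and n: "1 \<le> n"
  shows "\<exists>R. degree R < n \<and> (\<forall>i<n. poly R (alpha i) = y i)"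
proof -
  define L where "L i = (\<Prod>j\<in>{..<n} - {i}. [:- alpha j, 1:])" for i
  define c where "c i = y i / (\<Prod>j\<in>{..<n} - {i}. alpha i - alpha j)" for i
  define R where "R = (\<Sum>i<n. smult (c i) (L i))"
  have "degree (L i) \<le> n - 1" if "i < n" for i
  proof -
    have "degree (L i) \<le> (\<Sum>j\<in>{..<n} - {i}. degree [:- alpha j, 1:])"
      unfolding L_def using degree_prod_sum_le[of "{..<n} - {i}" "\<lambda>j. [:- alpha j, 1:]"]
      by (simp add: o_def)
    then show ?thesis using that by simp
  qed
  then have "degree R \<le> n - 1"
    unfolding R_def by (intro degree_sum_le) (auto intro: order.trans[OF degree_smult_le])
  then have "degree R < n" using n by simp
  moreover have "poly R (alpha m) = y m" if m: "m < n" for m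
  proof -
    have L_at: "poly (L i) (alpha m) = (\<Prod>j\<in>{..<n} - {i}. alpha m - alpha j)" for i
      unfolding L_def poly_prod by simp
    have "poly (L i) (alpha m) = 0" if "i < n" "i \<noteq> m" for i
      unfolding L_at by (rule prod_zero) (use m that in \<open>auto intro!: bexI[of _ m]\<close>)
    then have "poly R (alpha m) = c m * poly (L m) (alpha m)"
      unfolding R_def poly_sum using m by (simp add: sum.remove[of _ m])
    moreover have "(\<Prod>j\<in>{..<n} - {m}. alpha m - alpha j) \<noteq> 0"
      using m inj by (auto simp: prod_zero_iff dest: inj_onD)
    ultimately show ?thesis unfolding L_at c_def by simp
  qed
  ultimately show ?thesis by blast
qed

lemma Rpoly_interpolates:
  fixes alpha :: "nat \<Rightarrow> 'a::field"
  assumes inj: "inj_on alpha {..<n}" and n: "1 \<le> n"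
  shows "degree (Rpoly n alpha y) < n \<and> (\<forall>i<n. poly (Rpoly n alpha y) (alpha i) = y i)"
proof -
  obtain R where R: "degree R < n \<and> (\<forall>i<n. poly R (alpha i) = y i)"
    using interpolating_poly_exists[OF inj n] by blast
  have card: "card (alpha ` {..<n}) = n" using card_image[OF inj] by simp
  have "Q = R" if Q: "degree Q < n \<and> (\<forall>i<n. poly Q (alpha i) = y i)" for Q
    by (rule poly_eqI_degree[of "alpha ` {..<n}"]) (use Q R card in auto)
  then have "Rpoly n alpha y = R"
    unfolding Rpoly_def using R by (intro the_equality) blast+
  then show ?thesis using R by simp
qed

lemma degree_Rpoly_ge_if_not_codeword:
  fixes alpha w r :: "nat \<Rightarrow> 'a::field"
  assumes "inj_on alpha {..<n}" "1 \<le> n" "\<forall>i<n. w i \<noteq> 0" "r \<notin> grs_code n k alpha w"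
  shows "k \<le> degree (Rpoly n alpha (rprime w r))"
proof (rule ccontr)
  let ?R = "Rpoly n alpha (rprime w r)"
  assume "\<not> k \<le> degree ?R"
  then have "degree ?R < k" by simp
  moreover have "\<forall>i<n. r i = w i * poly ?R (alpha i)"
    using Rpoly_interpolates[OF assms(1,2)] assms(3) by (simp add: rprime_def)
  ultimately have "r \<in> grs_code n k alpha w" unfolding grs_code_def by blast
  with assms(4) show False ..
qed

theorem lemma10:
  fixes alpha w r :: "nat \<Rightarrow> 'a::{finite, field}"
    and n k s l :: nat and B :: "'a poly mat"
  assumes "1 \<le> k" "k < n" "n < card (UNIV :: 'a set)"
    and "inj_on alpha {..<n}" "\<forall>i<n. alpha i \<noteq> 0" "\<forall>i<n. w i \<noteq> 0"
    and "1 \<le> s" "s \<le> l"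
    and "r \<notin> grs_code n k alpha w"
    and "represents_basis B (l + 1) (M_module n alpha (rprime w r) s l)"
    and "weak_popov (B * W_mat k l)"
  shows "Delta (C_II (Gpoly n alpha) s (Rpoly n alpha (rprime w r)) l B * W_mat k (l + 1))
           = int (l + 1) * (int (degree (Rpoly n alpha (rprime w r))) - int k + 1)
       \<and> int (l + 1) * (int (degree (Rpoly n alpha (rprime w r))) - int k + 1)
           \<le> int (l + 1) * (int n - int k)"
proof -
  let ?R = "Rpoly n alpha (rprime w r)"
  have n: "1 \<le> n" using assms(1,2) by simp
  have "degree ?R < n" using Rpoly_interpolates[OF assms(4) n] by simp
  moreover have "k \<le> degree ?R"
    using degree_Rpoly_ge_if_not_codeword[OF assms(4) n assms(6,9)] .
  moreover have "B \<in> carrier_mat (l + 1) (l + 1)"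
    using assms(10) unfolding represents_basis_def by simp
  moreover have "Gpoly n alpha \<noteq> 0" unfolding Gpoly_def by (simp add: prod_zero_iff)
  ultimately show ?thesis
    using Delta_C_II_W[OF _ assms(11) assms(1)] by (auto intro: mult_left_mono)
qed

end
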